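(* Let $a,b$ be distinct letters. For every $D\in\{\mathrm{AH}_{\mathrm{ned}},\mathrm{AH}_{\mathrm{ged}},\mathrm{AH}_{\mathrm{ced}}\}$ and all natural numbers $j>i$, we have $D(a^*,(a^jb)^* )<D(a^*,(a^ib)^* )$.
   Context: Words are over a finite alphabet $\Sigma\ni a,b$. An edit path from $x$ to $y$ is a sequence $p=(a_1,b_1)\cdots(a_n,b_n)$ with $(a_i,b_i)\in(\Sigma\cup\{\varepsilon\})^2\setminus\{(\varepsilon,\varepsilon)\}$, $a_1\cdots a_n=x$, $b_1\cdots b_n=y$; $|p|=n$, $\mathrm{wgt}(p)=|\{i:a_i\ne b_i\}|$. $\mathrm{ed}(x,y)=\min_p\mathrm{wgt}(p)$; $\mathrm{ned}(x,y)=\min_p\mathrm{wgt}(p)/|p|$ ($\mathrm{ned}(\varepsilon,\varepsilon)=0$); $\mathrm{ged}(x,y)=\frac{2\mathrm{ed}(x,y)}{|x|+|y|+\mathrm{ed}(x,y)}$ ($0$ if $x=y=\varepsilon$); $\mathrm{ced}(x,y)$ is the minimum, over sequences $x=u_0,\dots,u_k=y$ with $\mathrm{ed}(u_{i-1},u_i)=1$, of $\sum_{i=1}^k1/\max(|u_{i-1}|,|u_i|)$. For a word distance $d$: $\overrightarrow{\mathrm{AH}}_{d}(X,Y)=\lim_{k\to\infty}\sup_{x\in X,|x|\ge k}\inf_{y\in Y}d(x,y)$ and $\mathrm{AH}_d(X,Y)=\max\{\overrightarrow{\mathrm{AH}}_{d}(X,Y),\overrightarrow{\mathrm{AH}}_{d}(Y,X)\}$.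 *)

theory Defs
  imports "HOL-Analysis.Analysis" "HOL-Library.Extended_Real"
begin

text \<open>Words over a finite alphabet: the alphabet is the finite type 'a.
  An edit step is a pair of optional letters (None = empty word), not (None,None).\<close>

type_synonym 'a edit_path = "('a option \<times> 'a option) list"

definition opt_word :: "'a option \<Rightarrow> 'a list" where
  "opt_word u = (case u of None \<Rightarrow> [] | Some c \<Rightarrow> [c])"

definition edit_paths :: "'a list \<Rightarrow> 'a list \<Rightarrow> 'a edit_path set" where
  "edit_paths x y = {p. (\<forall>e\<in>set p. e \<noteq> (None, None))
       \<and> concat (map (\<lambda>e. opt_word (fst e)) p) = x
       \<and> concat (map (\<lambda>e. opt_word (snd e)) p) = y}"

definition wgt :: "'a edit_path \<Rightarrow> nat" where
  "wgt p = length (filter (\<lambda>e. fst e \<noteq> snd e) p)"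

definition ed :: "'a list \<Rightarrow> 'a list \<Rightarrow> nat" where
  "ed x y = (INF p\<in>edit_paths x y. wgt p)"

definition ned :: "'a list \<Rightarrow> 'a list \<Rightarrow> real" where
  "ned x y = (if x = [] \<and> y = [] then 0
              else (INF p\<in>edit_paths x y. real (wgt p) / real (length p)))"

definition ged :: "'a list \<Rightarrow> 'a list \<Rightarrow> real" where
  "ged x y = (if x = [] \<and> y = [] then 0
              else 2 * real (ed x y) / (real (length x) + real (length y) + real (ed x y)))"

definition ced_chains :: "'a list \<Rightarrow> 'a list \<Rightarrow> 'a list list set" where
  "ced_chains x y = {us. us \<noteq> [] \<and> hd us = x \<and> last us = y
       \<and> (\<forall>i. Suc i < length us \<longrightarrow> ed (us ! i) (us ! Suc i) = 1)}"

definition ced :: "'a list \<Rightarrow> 'a list \<Rightarrow> real" where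
  "ced x y = (INF us\<in>ced_chains x y.
       (\<Sum>i<length us - 1. 1 / real (max (length (us ! i)) (length (us ! Suc i)))))"

definition AH_dir :: "('a list \<Rightarrow> 'a list \<Rightarrow> real) \<Rightarrow> 'a list set \<Rightarrow> 'a list set \<Rightarrow> ereal" where
  "AH_dir d X Y = lim (\<lambda>k. SUP x\<in>{x\<in>X. length x \<ge> k}. INF y\<in>Y. ereal (d x y))"

definition AH :: "('a list \<Rightarrow> 'a list \<Rightarrow> real) \<Rightarrow> 'a list set \<Rightarrow> 'a list set \<Rightarrow> ereal" where
  "AH d X Y = max (AH_dir d X Y) (AH_dir d Y X)"

definition star_lang :: "'a list \<Rightarrow> 'a list set" where
  "star_lang w = {concat (replicate n w) | n. True}"

end

theory Submission
  imports Defs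
begin

(* Let n = q(j+1) + r with r \<le> j. Deleting r letters of a^n and substituting q letters turns a^n
   into (a^j b)^q, and substituting m letters turns (a^j b)^m into a^(m(j+1)); for each of ned, ged
   and ced these edits cost at most (r + q)/(q(j+1)) \<le> 1/(j+1) + 1/q resp. 1/(j+1), so the
   asymptotic Hausdorff distance between a^* and (a^j b)^* is at most 1/(j+1). Conversely, an edit
   path from (a^i b)^m to a^n must edit every b and keeps at most i letters per b, which forces
   ned, ged \<ge> 2/(2i+3); for ced, the proportion of letters other than a changes by at most
   1/max(|u|,|v|) under a unit edit u \<rightarrow> v and falls from 1/(i+1) to 0. As
   1/(j+1) \<le> 1/(i+2) < 2/(2i+3), the inequality is strict. *)

section \<open>Edit paths and the edit distance\<close>

lemma opt_word_simps [simp]: "opt_word None = []" "opt_word (Some c) = [c]"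
  by (simp_all add: opt_word_def)

lemma opt_word_inject [simp]: "opt_word u = opt_word v \<longleftrightarrow> u = v"
  by (cases u; cases v) simp_all

definition edit_source :: "'a edit_path \<Rightarrow> 'a list" where
  "edit_source p = concat (map (\<lambda>e. opt_word (fst e)) p)"

definition edit_target :: "'a edit_path \<Rightarrow> 'a list" where
  "edit_target p = concat (map (\<lambda>e. opt_word (snd e)) p)"

lemma edit_source_simps [simp]:
  "edit_source [] = []" "edit_source (e # p) = opt_word (fst e) @ edit_source p"
  "edit_source (p @ q) = edit_source p @ edit_source q"
  by (simp_all add: edit_source_def)

lemma edit_target_simps [simp]:
  "edit_target [] = []" "edit_target (e # p) = opt_word (snd e) @ edit_target p"
  "edit_target (p @ q) = edit_target p @ edit_target q"
  by (simp_all add: edit_target_def)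

lemma edit_paths_iff:
  "p \<in> edit_paths x y \<longleftrightarrow>
     (\<forall>e\<in>set p. e \<noteq> (None, None)) \<and> edit_source p = x \<and> edit_target p = y"
  by (simp add: edit_paths_def edit_source_def edit_target_def)

lemma edit_paths_append:
  "p \<in> edit_paths x y \<Longrightarrow> q \<in> edit_paths x' y' \<Longrightarrow> p @ q \<in> edit_paths (x @ x') (y @ y')"
  by (auto simp: edit_paths_iff)

lemma wgt_simps [simp]:
  "wgt [] = 0" "wgt (e # p) = (if fst e = snd e then wgt p else Suc (wgt p))"
  "wgt (p @ q) = wgt p + wgt q"
  by (simp_all add: wgt_def)

definition hamming :: "'a list \<Rightarrow> 'a list \<Rightarrow> nat" where
  "hamming x y = length (filter (\<lambda>(c, c'). c \<noteq> c') (zip x y))"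

definition substitutions :: "'a list \<Rightarrow> 'a list \<Rightarrow> 'a edit_path" where
  "substitutions x y = map (\<lambda>(c, c'). (Some c, Some c')) (zip x y)"

lemma substitutions_edit_path:
  "length x = length y \<Longrightarrow> substitutions x y \<in> edit_paths x y"
  by (induction x y rule: list_induct2) (auto simp: substitutions_def edit_paths_iff)

lemma wgt_substitutions: "wgt (substitutions x y) = hamming x y"
  by (induction x y rule: list_induct2') (auto simp: substitutions_def hamming_def)

lemma length_substitutions: "length (substitutions x y) = min (length x) (length y)"
  by (simp add: substitutions_def)

lemma hamming_self [simp]: "hamming x x = 0"
  by (induction x) (auto simp: hamming_def)

definition deletions :: "'a list \<Rightarrow> 'a edit_path" where
  "deletions x = map (\<lambda>c. (Some c, None)) x"

definition insertions :: "'a list \<Rightarrow> 'a edit_path" where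
  "insertions y = map (\<lambda>c. (None, Some c)) y"

lemma deletions_edit_path: "deletions x \<in> edit_paths x []"
  by (induction x) (auto simp: deletions_def edit_paths_iff)

lemma insertions_edit_path: "insertions y \<in> edit_paths [] y"
  by (induction y) (auto simp: insertions_def edit_paths_iff)

lemma wgt_deletions [simp]: "wgt (deletions x) = length x"
  by (induction x) (auto simp: deletions_def)

lemma length_deletions [simp]: "length (deletions x) = length x"
  by (simp add: deletions_def)

lemma edit_paths_nonempty: "edit_paths x y \<noteq> {}"
  using edit_paths_append[OF deletions_edit_path[of x] insertions_edit_path[of y]] by auto

lemma ed_le_wgt: "p \<in> edit_paths x y \<Longrightarrow> ed x y \<le> wgt p"
  unfolding ed_def by (rule cINF_lower) auto

lemma ed_attained: obtains p where "p \<in> edit_paths x y" "wgt p = ed x y"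
proof -
  have "Inf (wgt ` edit_paths x y) \<in> wgt ` edit_paths x y"
    using edit_paths_nonempty by (intro Inf_nat_def1) auto
  then show ?thesis using that unfolding ed_def by auto
qed

lemma edit_source_eq_target:
  "\<forall>e\<in>set p. fst e = snd e \<Longrightarrow> edit_source p = edit_target p"
  by (induction p) auto

lemma ed_eq_0_iff: "ed x y = 0 \<longleftrightarrow> x = y"
proof
  assume "ed x y = 0"
  then obtain p where "p \<in> edit_paths x y" "wgt p = 0" using ed_attained by metis
  then show "x = y"
    using edit_source_eq_target[of p] by (auto simp: wgt_def filter_empty_conv edit_paths_iff)
next
  assume "x = y"
  then show "ed x y = 0"
    using ed_le_wgt[OF substitutions_edit_path[of x x]] by (simp add: wgt_substitutions)
qed

lemma ed_single_edit:
  assumes "e \<noteq> (None, None)" "fst e \<noteq> snd e"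
  shows "ed (w @ opt_word (fst e) @ z) (w @ opt_word (snd e) @ z) = 1"
proof -
  let ?x = "w @ opt_word (fst e) @ z" and ?y = "w @ opt_word (snd e) @ z"
  let ?p = "substitutions w w @ e # substitutions z z"
  have "?p \<in> edit_paths ?x ?y"
    using assms(1) substitutions_edit_path[of w w] substitutions_edit_path[of z z]
    by (auto simp: edit_paths_iff)
  moreover have "wgt ?p = 1"
    using assms(2) by (simp add: wgt_substitutions)
  ultimately have "ed ?x ?y \<le> 1"
    using ed_le_wgt by metis
  moreover have "?x \<noteq> ?y"
    using assms(2) by simp
  ultimately show ?thesis using ed_eq_0_iff[of ?x ?y] by linarith
qed

lemma ed_substitute: "c \<noteq> c' \<Longrightarrow> ed (w @ c # z) (w @ c' # z) = 1"
  using ed_single_edit[of "(Some c, Some c')"] by simp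

lemma ed_delete: "ed (w @ c # z) (w @ z) = 1"
  using ed_single_edit[of "(Some c, None)"] by simp

lemma ed_insert: "ed (w @ z) (w @ c # z) = 1"
  using ed_single_edit[of "(None, Some c)"] by simp

lemma ed_eq_1_cases:
  assumes "ed x y = 1"
  obtains w z e where "e \<noteq> (None, None)" "fst e \<noteq> snd e"
    "x = w @ opt_word (fst e) @ z" "y = w @ opt_word (snd e) @ z"
proof -
  obtain p where p: "p \<in> edit_paths x y" "wgt p = 1" using ed_attained assms by metis
  then obtain e where "filter (\<lambda>e. fst e \<noteq> snd e) p = [e]"
    by (auto simp: wgt_def length_Suc_conv)
  then obtain p1 p2 where p12: "p = p1 @ e # p2" "\<forall>e\<in>set p1. fst e = snd e"
      "fst e \<noteq> snd e" "[] = filter (\<lambda>e. fst e \<noteq> snd e) p2"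
    by (auto simp: filter_eq_Cons_iff)
  have "\<forall>e\<in>set p2. fst e = snd e" using p12(4)[symmetric] by (simp add: filter_empty_conv)
  then have "edit_target p1 = edit_source p1" "edit_target p2 = edit_source p2"
    using p12(2) edit_source_eq_target by metis+
  with p(1) p12(1,3) show ?thesis
    by (intro that[of e "edit_source p1" "edit_source p2"]) (auto simp: edit_paths_iff)
qed

definition matches :: "'a edit_path \<Rightarrow> nat" where
  "matches p = length (filter (\<lambda>e. fst e = snd e) p)"

lemma length_eq_wgt_plus_matches: "length p = wgt p + matches p"
  using sum_length_filter_compl[of "\<lambda>e. fst e = snd e" p] by (simp add: wgt_def matches_def)

lemma length_edit_source_le: "length (edit_source p) \<le> length p"
  by (induction p) (auto simp: opt_word_def split: option.split)

lemma length_edit_target_le: "length (edit_target p) \<le> length p"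
  by (induction p) (auto simp: opt_word_def split: option.split)

lemma matches_into_replicate_le:
  assumes "p \<in> edit_paths x (replicate n a)"
  shows "matches p \<le> length (filter (\<lambda>c. c = a) x)"
proof -
  have "\<forall>e\<in>set p. e \<noteq> (None, None) \<Longrightarrow> set (edit_target p) \<subseteq> {a} \<Longrightarrow>
      matches p \<le> length (filter (\<lambda>c. c = a) (edit_source p))"
    by (induction p) (auto simp: matches_def opt_word_def split: option.splits)
  then show ?thesis using assms by (auto simp: edit_paths_iff set_replicate_conv_if)
qed

section \<open>The contextual edit distance\<close>

definition chain_cost :: "'a list list \<Rightarrow> real" where
  "chain_cost us = (\<Sum>i<length us - 1. 1 / real (max (length (us ! i)) (length (us ! Suc i))))"

lemma ced_eq_INF_chain_cost: "ced x y = (INF us\<in>ced_chains x y. chain_cost us)"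
  by (simp add: ced_def chain_cost_def)

lemma chain_cost_nonneg: "0 \<le> chain_cost us"
  unfolding chain_cost_def by (intro sum_nonneg) auto

lemma chain_cost_Cons:
  "us \<noteq> [] \<Longrightarrow> chain_cost (x # us) = 1 / real (max (length x) (length (hd us))) + chain_cost us"
  by (cases us) (simp_all add: chain_cost_def sum.lessThan_Suc_shift del: sum.lessThan_Suc)

lemma ced_le_chain_cost: "us \<in> ced_chains x y \<Longrightarrow> ced x y \<le> chain_cost us"
  unfolding ced_eq_INF_chain_cost
  by (rule cINF_lower) (auto intro: bdd_belowI[where m = 0] chain_cost_nonneg)

lemma ced_chains_Cons:
  assumes "us \<in> ced_chains y z" "ed x y = 1"
  shows "x # us \<in> ced_chains x z"
proof -
  have "us \<noteq> []" "hd us = y" "last us = z"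
    "\<And>i. Suc i < length us \<Longrightarrow> ed (us ! i) (us ! Suc i) = 1"
    using assms(1) by (auto simp: ced_chains_def)
  then show ?thesis
    using assms(2) unfolding ced_chains_def by (auto simp: nth_Cons hd_conv_nth split: nat.split)
qed

inductive edit_chain :: "nat \<Rightarrow> 'a list \<Rightarrow> 'a list \<Rightarrow> nat \<Rightarrow> bool" where
  refl: "L \<le> length x \<Longrightarrow> edit_chain L x x 0"
| step: "ed x y = 1 \<Longrightarrow> L \<le> length x \<Longrightarrow> edit_chain L y z s \<Longrightarrow> edit_chain L x z (Suc s)"

lemma edit_chain_trans:
  "edit_chain L x y s \<Longrightarrow> edit_chain L y z t \<Longrightarrow> edit_chain L x z (s + t)"
  by (induction rule: edit_chain.induct) (auto intro: edit_chain.step)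

lemma edit_chain_single:
  "ed x y = 1 \<Longrightarrow> L \<le> length x \<Longrightarrow> L \<le> length y \<Longrightarrow> edit_chain L x y 1"
  using edit_chain.step[OF _ _ edit_chain.refl] by fastforce

lemma edit_chain_ced_chain:
  "edit_chain L x y s \<Longrightarrow> \<exists>us\<in>ced_chains x y. real L * chain_cost us \<le> real s"
proof (induction rule: edit_chain.induct)
  case (refl L x)
  have "[x] \<in> ced_chains x x" by (simp add: ced_chains_def)
  then show ?case by (force simp: chain_cost_def)
next
  case (step x y L z s)
  then obtain us where us: "us \<in> ced_chains y z" "real L * chain_cost us \<le> real s" by blast
  then have "us \<noteq> []" "hd us = y" by (auto simp: ced_chains_def)
  moreover have "real L * (1 / real (max (length x) (length y))) \<le> 1"
    using step.hyps(2) by (auto simp: divide_le_eq_1 max_def)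
  ultimately have "real L * chain_cost (x # us) \<le> real (Suc s)"
    using us(2) by (simp add: chain_cost_Cons distrib_left)
  then show ?case using ced_chains_Cons[OF us(1) step.hyps(1)] by blast
qed

lemma ced_le_edit_chain: "edit_chain L x y s \<Longrightarrow> 0 < L \<Longrightarrow> ced x y \<le> real s / real L"
proof -
  assume "edit_chain L x y s" "0 < L"
  then obtain us where "us \<in> ced_chains x y" "real L * chain_cost us \<le> real s"
    using edit_chain_ced_chain by blast
  moreover from this(2) \<open>0 < L\<close> have "chain_cost us \<le> real s / real L"
    by (simp add: le_divide_eq mult.commute)
  ultimately show "ced x y \<le> real s / real L"
    using ced_le_chain_cost order_trans by blast
qed

lemma edit_chain_drop_prefix: "L \<le> length x \<Longrightarrow> edit_chain L (w @ x) x (length w)"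
proof (induction w)
  case (Cons c w)
  from Cons ed_delete[of "[]" c "w @ x"] show ?case by (auto intro: edit_chain.step)
qed (auto intro: edit_chain.refl)

lemma edit_chain_from_Nil: "edit_chain 0 [] y (length y)"
proof (induction y)
  case (Cons c y)
  have "edit_chain 0 y (c # y) 1"
    using ed_insert[of "[]" y c] by (intro edit_chain_single) auto
  from edit_chain_trans[OF Cons this] show ?case by simp
qed (auto intro: edit_chain.refl)

lemma ced_chains_nonempty: "ced_chains x y \<noteq> {}"
  using edit_chain_ced_chain[OF edit_chain_trans[OF
      edit_chain_drop_prefix[of 0 "[]" x, simplified] edit_chain_from_Nil]]
  by blast

lemma edit_chain_hamming:
  "length u = length v \<Longrightarrow> L \<le> length w + length u \<Longrightarrow>
   edit_chain L (w @ u) (w @ v) (hamming u v)"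
proof (induction u v arbitrary: w rule: list_induct2)
  case Nil
  then show ?case by (auto intro: edit_chain.refl simp: hamming_def)
next
  case (Cons c u c' v)
  have IH: "edit_chain L ((w @ [c']) @ u) ((w @ [c']) @ v) (hamming u v)"
    using Cons by (intro Cons.IH) auto
  show ?case
  proof (cases "c = c'")
    case False
    have "edit_chain L (w @ c # u) (w @ c' # u) 1"
      using Cons.prems ed_substitute[OF False] by (intro edit_chain_single) auto
    from edit_chain_trans[OF this] IH False show ?thesis by (simp add: hamming_def)
  qed (use IH in \<open>simp add: hamming_def\<close>)
qed

lemma ced_ge_Lipschitz:
  assumes f: "\<And>u v. ed u v = 1 \<Longrightarrow> f u - f v \<le> 1 / real (max (length u) (length v))"
  shows "f x - f y \<le> ced x y"
  unfolding ced_eq_INF_chain_cost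
proof (rule cINF_greatest[OF ced_chains_nonempty])
  fix us assume us: "us \<in> ced_chains x y"
  then have "us \<noteq> []" "hd us = x" "last us = y"
    and steps: "\<And>i. Suc i < length us \<Longrightarrow> ed (us ! i) (us ! Suc i) = 1"
    by (auto simp: ced_chains_def)
  then have "f x - f y = f (us ! 0) - f (us ! (length us - 1))"
    by (simp add: hd_conv_nth last_conv_nth)
  also have "\<dots> = (\<Sum>i<length us - 1. f (us ! i) - f (us ! Suc i))"
    by (rule sum_lessThan_telescope'[symmetric])
  also have "\<dots> \<le> chain_cost us"
    unfolding chain_cost_def by (intro sum_mono f steps) auto
  finally show "f x - f y \<le> chain_cost us" .
qed

definition freq :: "('a \<Rightarrow> bool) \<Rightarrow> 'a list \<Rightarrow> real" where
  "freq P u = real (length (filter P u)) / real (length u)"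

lemma abs_ratio_extend_le:
  fixes A B \<delta> :: real
  assumes "0 \<le> B" "B \<le> A" "0 \<le> \<delta>" "\<delta> \<le> 1"
  shows "\<bar>(B + \<delta>) / (A + 1) - B / A\<bar> \<le> 1 / (A + 1)"
proof (cases "A = 0")
  case False
  then have "A > 0" using assms(1,2) by linarith
  have "A * \<delta> \<le> A" "0 \<le> A * \<delta>" using assms \<open>A > 0\<close> by (simp_all add: mult_left_le)
  then have "\<bar>A * \<delta> - B\<bar> \<le> A" using assms(1,2) by linarith
  have "(B + \<delta>) / (A + 1) - B / A = (A * \<delta> - B) / (A * (A + 1))"
    using \<open>A > 0\<close> by (simp add: field_simps)
  then have "\<bar>(B + \<delta>) / (A + 1) - B / A\<bar> = \<bar>A * \<delta> - B\<bar> / (A * (A + 1))"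
    using \<open>A > 0\<close> by (simp add: abs_divide abs_mult)
  also have "\<dots> \<le> A / (A * (A + 1))"
    using \<open>A > 0\<close> \<open>\<bar>A * \<delta> - B\<bar> \<le> A\<close> by (intro divide_right_mono) auto
  also have "\<dots> = 1 / (A + 1)" using \<open>A > 0\<close> by simp
  finally show ?thesis .
qed (use assms in simp)

lemma freq_delete: "\<bar>freq P (w @ c # z) - freq P (w @ z)\<bar> \<le> 1 / real (length (w @ c # z))"
proof -
  let ?A = "real (length (w @ z))" and ?B = "real (length (filter P (w @ z)))"
  let ?\<delta> = "if P c then 1 else 0 :: real"
  have "?B \<le> ?A" by (simp only: of_nat_le_iff length_filter_le)
  then have "\<bar>(?B + ?\<delta>) / (?A + 1) - ?B / ?A\<bar> \<le> 1 / (?A + 1)"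
    by (intro abs_ratio_extend_le) auto
  moreover have "freq P (w @ c # z) = (?B + ?\<delta>) / (?A + 1)" "freq P (w @ z) = ?B / ?A"
    "real (length (w @ c # z)) = ?A + 1"
    by (simp_all add: freq_def algebra_simps)
  ultimately show ?thesis by (simp only:)
qed

lemma freq_substitute:
  "\<bar>freq P (w @ c # z) - freq P (w @ c' # z)\<bar> \<le> 1 / real (length (w @ c # z))"
proof -
  have "freq P (w @ c # z) - freq P (w @ c' # z) =
      ((if P c then 1 else 0) - (if P c' then 1 else 0)) / real (length (w @ c # z))"
    by (simp add: freq_def diff_divide_distrib[symmetric])
  then show ?thesis by (simp add: abs_divide divide_right_mono)
qed

lemma freq_unit_edit:
  assumes "ed u v = 1"
  shows "\<bar>freq P u - freq P v\<bar> \<le> 1 / real (max (length u) (length v))"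
proof -
  obtain w z e where e: "e \<noteq> (None, None)" "fst e \<noteq> snd e"
    and u: "u = w @ opt_word (fst e) @ z" and v: "v = w @ opt_word (snd e) @ z"
    using ed_eq_1_cases[OF assms] by metis
  show ?thesis
  proof (cases e)
    case (Pair s t)
    with e consider c c' where "s = Some c" "t = Some c'" | c where "s = Some c" "t = None"
      | c where "s = None" "t = Some c"
      by (cases s; cases t) auto
    then show ?thesis
    proof cases
      case 1
      then show ?thesis using freq_substitute[of P w c z c'] by (simp add: u v Pair)
    next
      case 2
      then show ?thesis using freq_delete[of P w c z] by (simp add: u v Pair)
    next
      case 3
      then show ?thesis using freq_delete[of P w c z] by (simp add: u v Pair abs_minus_commute)
    qed
  qed
qed

lemma ced_ge_freq_diff: "freq P x - freq P y \<le> ced x y"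
  using freq_unit_edit abs_le_iff by (blast intro: ced_ge_Lipschitz)

section \<open>Bounds for the three normalised distances\<close>

lemma ned_le_path: "p \<in> edit_paths x y \<Longrightarrow> ned x y \<le> real (wgt p) / real (length p)"
  unfolding ned_def by (auto intro!: cINF_lower bdd_belowI[where m = 0])

lemma ged_le_path:
  assumes "p \<in> edit_paths x y"
  shows "ged x y \<le> 2 * real (wgt p) / (real (length x) + real (length y))"
proof (cases "x = [] \<and> y = []")
  case False
  then have pos: "real (length x) + real (length y) > 0" by (auto simp: add_pos_nonneg add_nonneg_pos)
  have "ged x y \<le> 2 * real (ed x y) / (real (length x) + real (length y))"
    using False pos by (auto simp: ged_def intro!: divide_left_mono)
  also have "\<dots> \<le> 2 * real (wgt p) / (real (length x) + real (length y))"
    using ed_le_wgt[OF assms] pos by (intro divide_right_mono) auto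
  finally show ?thesis .
qed (simp add: ged_def)

lemma deletions_substitutions_edit_path:
  "length x = length y \<Longrightarrow> deletions w @ substitutions x y \<in> edit_paths (w @ x) y"
  using edit_paths_append[OF deletions_edit_path substitutions_edit_path] by fastforce

lemma ned_le_hamming:
  assumes "length x = length y" "y \<noteq> []"
  shows "ned (w @ x) y \<le> real (length w + hamming x y) / real (length y)"
proof -
  let ?p = "deletions w @ substitutions x y"
  have "ned (w @ x) y \<le> real (wgt ?p) / real (length ?p)"
    using ned_le_path[OF deletions_substitutions_edit_path[OF assms(1)]] .
  also have "\<dots> = real (length w + hamming x y) / real (length w + length y)"
    using assms(1) by (simp add: wgt_substitutions length_substitutions)
  also have "\<dots> \<le> real (length w + hamming x y) / real (length y)"
    using assms(2) by (intro frac_le) simp_all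
  finally show ?thesis .
qed

lemma ged_le_hamming:
  assumes "length x = length y" "y \<noteq> []"
  shows "ged (w @ x) y \<le> real (length w + hamming x y) / real (length y)"
proof -
  let ?h = "real (length w + hamming x y)"
  have "ged (w @ x) y \<le> 2 * ?h / (real (length (w @ x)) + real (length y))"
    using ged_le_path[OF deletions_substitutions_edit_path[OF assms(1)]]
    by (simp add: wgt_substitutions)
  also have "\<dots> \<le> 2 * ?h / (2 * real (length y))"
    using assms by (intro frac_le) simp_all
  also have "\<dots> = ?h / real (length y)" by (rule mult_divide_mult_cancel_left) simp
  finally show ?thesis .
qed

lemma ced_le_hamming:
  assumes "length x = length y" "y \<noteq> []"
  shows "ced (w @ x) y \<le> real (length w + hamming x y) / real (length y)"
proof -
  have "edit_chain (length y) (w @ x) x (length w)"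
    using assms(1) by (intro edit_chain_drop_prefix) simp
  moreover have "edit_chain (length y) ([] @ x) ([] @ y) (hamming x y)"
    using assms(1) by (intro edit_chain_hamming) simp_all
  ultimately have "edit_chain (length y) (w @ x) y (length w + hamming x y)"
    using edit_chain_trans by fastforce
  then show ?thesis using ced_le_edit_chain assms(2) by blast
qed

lemma dist_le_hamming:
  "d \<in> {ned, ged, ced} \<Longrightarrow> length x = length y \<Longrightarrow> y \<noteq> [] \<Longrightarrow>
   d (w @ x) y \<le> real (length w + hamming x y) / real (length y)"
  using ned_le_hamming ged_le_hamming ced_le_hamming by blast

lemma wgt_into_replicate_ge:
  assumes "p \<in> edit_paths x (replicate n a)"
  shows "length (filter (\<lambda>c. c \<noteq> a) x) \<le> wgt p"
proof -
  have "length x \<le> length p"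
    using assms length_edit_source_le by (fastforce simp: edit_paths_iff)
  then show ?thesis
    using matches_into_replicate_le[OF assms] length_eq_wgt_plus_matches[of p]
      sum_length_filter_compl[of "\<lambda>c. c = a" x] by simp
qed

lemma length_path_into_replicate_le:
  assumes p: "p \<in> edit_paths x (replicate n a)"
    and x: "length x \<le> (i + 1) * length (filter (\<lambda>c. c \<noteq> a) x)"
  shows "length p \<le> (i + 1) * wgt p"
proof -
  let ?k = "length (filter (\<lambda>c. c \<noteq> a) x)"
  have "matches p \<le> length x - ?k"
    using matches_into_replicate_le[OF p] sum_length_filter_compl[of "\<lambda>c. c = a" x] by simp
  also have "\<dots> \<le> i * ?k" using x by simp
  also have "\<dots> \<le> i * wgt p" using wgt_into_replicate_ge[OF p] by simp
  finally show ?thesis using length_eq_wgt_plus_matches[of p] by simp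
qed

lemma length_filter_neq_pos:
  "x \<noteq> [] \<Longrightarrow> length x \<le> (i + 1) * length (filter (\<lambda>c. c \<noteq> a) x) \<Longrightarrow>
   0 < length (filter (\<lambda>c. c \<noteq> a) x)"
  by (cases "length (filter (\<lambda>c. c \<noteq> a) x)") auto

lemma ned_into_replicate_ge:
  assumes "x \<noteq> []" "length x \<le> (i + 1) * length (filter (\<lambda>c. c \<noteq> a) x)"
  shows "1 / real (i + 1) \<le> ned x (replicate n a)"
proof -
  have "1 / real (i + 1) \<le> real (wgt p) / real (length p)"
    if p: "p \<in> edit_paths x (replicate n a)" for p
  proof -
    have "0 < wgt p"
      using length_filter_neq_pos[OF assms] wgt_into_replicate_ge[OF p] by linarith
    moreover have "real (length p) \<le> real (i + 1) * real (wgt p)"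
      using length_path_into_replicate_le[OF p assms(2)] by (simp only: of_nat_mult [symmetric] of_nat_le_iff)
    ultimately show ?thesis
      using length_eq_wgt_plus_matches[of p] by (simp add: divide_simps ac_simps)
  qed
  then show ?thesis
    using assms(1) unfolding ned_def by (auto intro: cINF_greatest[OF edit_paths_nonempty])
qed

lemma ged_into_replicate_ge:
  assumes "x \<noteq> []" "length x \<le> (i + 1) * length (filter (\<lambda>c. c \<noteq> a) x)"
  shows "2 / real (2 * i + 3) \<le> ged x (replicate n a)"
proof -
  obtain p where p: "p \<in> edit_paths x (replicate n a)" and e: "wgt p = ed x (replicate n a)"
    by (rule ed_attained)
  let ?e = "ed x (replicate n a)"
  have "0 < ?e"
    using length_filter_neq_pos[OF assms] wgt_into_replicate_ge[OF p] e by linarith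
  have "length x \<le> (i + 1) * ?e"
    using assms(2) wgt_into_replicate_ge[OF p] e by (metis le_trans mult_le_mono2)
  moreover have "n \<le> (i + 1) * ?e"
    using length_edit_target_le[of p] length_path_into_replicate_le[OF p assms(2)] p e
    by (auto simp: edit_paths_iff)
  ultimately have "length x + n + ?e \<le> (2 * i + 3) * ?e" by (simp add: algebra_simps)
  then have "real (length x) + real n + real ?e \<le> real (2 * i + 3) * real ?e"
    by (simp only: of_nat_add [symmetric] of_nat_mult [symmetric] of_nat_le_iff)
  with \<open>0 < ?e\<close> have "2 * real ?e / (real (2 * i + 3) * real ?e)
      \<le> 2 * real ?e / (real (length x) + real n + real ?e)"
    by (intro frac_le) auto
  with \<open>0 < ?e\<close> show ?thesis
    using assms(1) by (simp add: ged_def)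
qed

lemma ced_into_replicate_ge:
  assumes "x \<noteq> []" "length x \<le> (i + 1) * length (filter (\<lambda>c. c \<noteq> a) x)"
  shows "1 / real (i + 1) \<le> ced x (replicate n a)"
proof -
  have "real (length x) \<le> real (i + 1) * real (length (filter (\<lambda>c. c \<noteq> a) x))"
    using assms(2) by (simp only: of_nat_mult [symmetric] of_nat_le_iff)
  then have "1 / real (i + 1) \<le> freq (\<lambda>c. c \<noteq> a) x"
    using assms(1) by (simp add: freq_def divide_simps ac_simps)
  also have "\<dots> = freq (\<lambda>c. c \<noteq> a) x - freq (\<lambda>c. c \<noteq> a) (replicate n a)"
    by (simp add: freq_def)
  also have "\<dots> \<le> ced x (replicate n a)" by (rule ced_ge_freq_diff)
  finally show ?thesis .
qed

lemma dist_into_replicate_ge: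
  assumes "d \<in> {ned, ged, ced}" "x \<noteq> []"
    "length x \<le> (i + 1) * length (filter (\<lambda>c. c \<noteq> a) x)"
  shows "2 / real (2 * i + 3) \<le> d x (replicate n a)"
proof -
  have "2 / real (2 * i + 3) \<le> 1 / real (i + 1)" by (simp add: divide_simps)
  with assms show ?thesis
    using ned_into_replicate_ge[OF assms(2,3)] ged_into_replicate_ge[OF assms(2,3)]
      ced_into_replicate_ge[OF assms(2,3)]
    by (auto intro: order_trans simp del: of_nat_add)
qed

section \<open>Asymptotic Hausdorff distances\<close>

lemma AH_dir_eq_INF:
  "AH_dir d X Y = (INF k. SUP x\<in>{x\<in>X. k \<le> length x}. INF y\<in>Y. ereal (d x y))"
proof -
  have "decseq (\<lambda>k. SUP x\<in>{x\<in>X. k \<le> length x}. INF y\<in>Y. ereal (d x y))"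
    unfolding decseq_def by (intro allI impI SUP_subset_mono) auto
  then show ?thesis unfolding AH_dir_def by (intro limI LIMSEQ_INF)
qed

lemma AH_dir_le:
  assumes "\<And>\<epsilon>. 0 < \<epsilon> \<Longrightarrow> \<exists>k. \<forall>x\<in>X. k \<le> length x \<longrightarrow> (\<exists>y\<in>Y. d x y \<le> c + \<epsilon>)"
  shows "AH_dir d X Y \<le> ereal c"
proof (rule ereal_le_epsilon2)
  fix \<epsilon> :: real assume "0 < \<epsilon>"
  then obtain k where k: "\<And>x. x \<in> X \<Longrightarrow> k \<le> length x \<Longrightarrow> \<exists>y\<in>Y. d x y \<le> c + \<epsilon>"
    using assms by blast
  have "(SUP x\<in>{x\<in>X. k \<le> length x}. INF y\<in>Y. ereal (d x y)) \<le> ereal (c + \<epsilon>)"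
  proof (rule SUP_least)
    fix x assume "x \<in> {x\<in>X. k \<le> length x}"
    then obtain y where "y \<in> Y" "d x y \<le> c + \<epsilon>" using k by blast
    then show "(INF y\<in>Y. ereal (d x y)) \<le> ereal (c + \<epsilon>)"
      by (meson INF_lower2 ereal_less_eq(3))
  qed
  then show "AH_dir d X Y \<le> ereal c + ereal \<epsilon>"
    unfolding AH_dir_eq_INF by (simp add: INF_lower2)
qed

lemma AH_dir_ge:
  assumes "\<And>k. \<exists>x\<in>X. k \<le> length x \<and> (\<forall>y\<in>Y. c \<le> d x y)"
  shows "ereal c \<le> AH_dir d X Y"
  unfolding AH_dir_eq_INF
proof (rule INF_greatest)
  fix k :: nat
  obtain x where x: "x \<in> X" "k \<le> length x" "\<forall>y\<in>Y. c \<le> d x y" using assms by blast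
  have "ereal c \<le> (INF y\<in>Y. ereal (d x y))" using x(3) by (intro INF_greatest) auto
  also have "\<dots> \<le> (SUP x\<in>{x\<in>X. k \<le> length x}. INF y\<in>Y. ereal (d x y))"
    using x by (intro SUP_upper) auto
  finally show "ereal c \<le> \<dots>" .
qed

lemma star_lang_singleton: "star_lang [a] = range (\<lambda>n. replicate n a)"
  by (auto simp: star_lang_def concat_replicate_trivial)

lemma length_concat_replicate: "length (concat (replicate m w)) = m * length w"
  by (induction m) auto

lemma length_filter_neq_concat_replicate:
  "length (filter (\<lambda>c. c \<noteq> a) (concat (replicate m (replicate i a @ [b]))))
     = (if b = a then 0 else m)"
  by (induction m) auto

lemma hamming_replicate_left:
  "hamming (replicate (length y) a) y = length (filter (\<lambda>c. c \<noteq> a) y)"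
  by (induction y) (auto simp: hamming_def)

lemma hamming_replicate_right:
  "hamming y (replicate (length y) a) = length (filter (\<lambda>c. c \<noteq> a) y)"
  by (induction y) (auto simp: hamming_def)

lemma frac_le_inverse_add_inverse:
  assumes "r \<le> j" "h \<le> q" "0 < q"
  shows "real (r + h) / real (q * (j + 1)) \<le> 1 / real (j + 1) + 1 / real q"
proof -
  have "real (r + h) / real (q * (j + 1)) \<le> (real q + real (j + 1)) / (real q * real (j + 1))"
    unfolding of_nat_mult using assms by (intro divide_right_mono) auto
  also have "\<dots> = 1 / real (j + 1) + 1 / real q"
    using assms by (simp add: field_simps)
  finally show ?thesis .
qed

lemma dist_replicate_concat_replicate_le:
  assumes "d \<in> {ned, ged, ced}" "r \<le> j" "0 < q"
  shows "d (replicate (r + q * (j + 1)) a) (concat (replicate q (replicate j a @ [b])))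
    \<le> 1 / real (j + 1) + 1 / real q"
proof -
  let ?y = "concat (replicate q (replicate j a @ [b]))"
  have len_y: "length ?y = q * (j + 1)" by (simp add: length_concat_replicate)
  then have "?y \<noteq> []" using assms(3) by auto
  have "d (replicate r a @ replicate (length ?y) a) ?y
      \<le> real (length (replicate r a) + hamming (replicate (length ?y) a) ?y) / real (length ?y)"
    by (rule dist_le_hamming[OF assms(1)]) (use \<open>?y \<noteq> []\<close> in simp_all)
  also have "\<dots> \<le> 1 / real (j + 1) + 1 / real q"
    unfolding length_replicate hamming_replicate_left unfolding len_y using assms(2,3)
    by (intro frac_le_inverse_add_inverse) (auto simp: length_filter_neq_concat_replicate)
  finally show ?thesis by (simp add: len_y replicate_add)
qed

lemma AH_dir_letter_star_block_star_le:
  assumes "d \<in> {ned, ged, ced}"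
  shows "AH_dir d (star_lang [a]) (star_lang (replicate j a @ [b])) \<le> ereal (1 / real (j + 1))"
proof (rule AH_dir_le)
  fix \<epsilon> :: real assume "0 < \<epsilon>"
  then obtain Q where "1 / real (Suc Q) < \<epsilon>" using reals_Archimedean by (auto simp: inverse_eq_divide)
  have "\<exists>y\<in>star_lang (replicate j a @ [b]). d x y \<le> 1 / real (j + 1) + \<epsilon>"
    if x_in: "x \<in> star_lang [a]" and x_long: "Suc Q * (j + 1) \<le> length x" for x
  proof -
    obtain n where x: "x = replicate n a" using x_in unfolding star_lang_singleton by blast
    define q where "q = n div (j + 1)"
    define r where "r = n mod (j + 1)"
    have "Suc Q \<le> q" using x_long x unfolding q_def by (simp add: less_eq_div_iff_mult_less_eq)
    have "r \<le> j" unfolding r_def by (simp add: less_Suc_eq_le)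
    have "x = replicate (r + q * (j + 1)) a"
      unfolding x q_def r_def by (metis add.commute div_mult_mod_eq)
    then have "d x (concat (replicate q (replicate j a @ [b]))) \<le> 1 / real (j + 1) + 1 / real q"
      using dist_replicate_concat_replicate_le[OF assms \<open>r \<le> j\<close>] \<open>Suc Q \<le> q\<close> by simp
    also have "\<dots> \<le> 1 / real (j + 1) + \<epsilon>"
      using \<open>Suc Q \<le> q\<close> \<open>1 / real (Suc Q) < \<epsilon>\<close> frac_le[of 1 1 "real (Suc Q)" "real q"] by simp
    finally show ?thesis unfolding star_lang_def by blast
  qed
  then show "\<exists>k. \<forall>x\<in>star_lang [a]. k \<le> length x \<longrightarrow>
      (\<exists>y\<in>star_lang (replicate j a @ [b]). d x y \<le> 1 / real (j + 1) + \<epsilon>)"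
    by blast
qed

lemma dist_concat_replicate_replicate_le:
  assumes "d \<in> {ned, ged, ced}" "0 < m"
  shows "d (concat (replicate m (replicate j a @ [b]))) (replicate (m * (j + 1)) a) \<le> 1 / real (j + 1)"
proof -
  let ?y = "concat (replicate m (replicate j a @ [b]))"
  have len_y: "length ?y = m * (j + 1)" by (simp add: length_concat_replicate)
  then have "?y \<noteq> []" using assms(2) by auto
  then have "d ?y (replicate (length ?y) a) \<le> real (hamming ?y (replicate (length ?y) a)) / real (length ?y)"
    using dist_le_hamming[OF assms(1), of ?y "replicate (length ?y) a" "[]"] by simp
  also have "\<dots> \<le> real m / real (m * (j + 1))"
    unfolding hamming_replicate_right unfolding len_y
    by (intro divide_right_mono) (auto simp: length_filter_neq_concat_replicate)
  also have "\<dots> = 1 / real (j + 1)"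
    using assms(2) unfolding of_nat_mult by (intro nonzero_divide_mult_cancel_left) simp
  finally show ?thesis by (simp add: len_y)
qed

lemma AH_dir_block_star_letter_star_le:
  assumes "d \<in> {ned, ged, ced}"
  shows "AH_dir d (star_lang (replicate j a @ [b])) (star_lang [a]) \<le> ereal (1 / real (j + 1))"
proof (rule AH_dir_le)
  fix \<epsilon> :: real assume "0 < \<epsilon>"
  have "\<exists>x\<in>star_lang [a]. d y x \<le> 1 / real (j + 1) + \<epsilon>"
    if y_in: "y \<in> star_lang (replicate j a @ [b])" and y_long: "1 \<le> length y" for y
  proof -
    obtain m where y: "y = concat (replicate m (replicate j a @ [b]))"
      using y_in unfolding star_lang_def by blast
    with y_long have "0 < m" by (cases m) auto
    then have "d y (replicate (m * (j + 1)) a) \<le> 1 / real (j + 1)"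
      unfolding y by (rule dist_concat_replicate_replicate_le[OF assms])
    then have "d y (replicate (m * (j + 1)) a) \<le> 1 / real (j + 1) + \<epsilon>"
      using \<open>0 < \<epsilon>\<close> by linarith
    then show ?thesis unfolding star_lang_singleton by blast
  qed
  then show "\<exists>k. \<forall>y\<in>star_lang (replicate j a @ [b]). k \<le> length y \<longrightarrow>
      (\<exists>x\<in>star_lang [a]. d y x \<le> 1 / real (j + 1) + \<epsilon>)"
    by blast
qed

lemma AH_dir_block_star_letter_star_ge:
  assumes "a \<noteq> b" "d \<in> {ned, ged, ced}"
  shows "ereal (2 / real (2 * i + 3)) \<le> AH_dir d (star_lang (replicate i a @ [b])) (star_lang [a])"
proof (rule AH_dir_ge)
  fix k
  let ?y = "concat (replicate (Suc k) (replicate i a @ [b]))"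
  have "length ?y = Suc k * (i + 1)" by (simp add: length_concat_replicate)
  then have "k \<le> length ?y" "?y \<noteq> []" by auto
  moreover have "length ?y \<le> (i + 1) * length (filter (\<lambda>c. c \<noteq> a) ?y)"
    using assms(1) \<open>length ?y = Suc k * (i + 1)\<close> by (simp only: length_filter_neq_concat_replicate) simp
  ultimately have "\<forall>x\<in>star_lang [a]. 2 / real (2 * i + 3) \<le> d ?y x"
    using dist_into_replicate_ge[OF assms(2)] unfolding star_lang_singleton by blast
  then show "\<exists>y\<in>star_lang (replicate i a @ [b]). k \<le> length y \<and>
      (\<forall>x\<in>star_lang [a]. 2 / real (2 * i + 3) \<le> d y x)"
    using \<open>k \<le> length ?y\<close> unfolding star_lang_def by blast
qed

theorem mainTheorem9:
  fixes a b :: "'a::finite" and d :: "'a list \<Rightarrow> 'a list \<Rightarrow> real" and i j :: nat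
  assumes "a \<noteq> b" and "d \<in> {ned, ged, ced}" and "i < j"
  shows "AH d (star_lang [a]) (star_lang (replicate j a @ [b]))
         < AH d (star_lang [a]) (star_lang (replicate i a @ [b]))"
proof -
  have "AH d (star_lang [a]) (star_lang (replicate j a @ [b])) \<le> ereal (1 / real (j + 1))"
    using AH_dir_letter_star_block_star_le[OF assms(2)] AH_dir_block_star_letter_star_le[OF assms(2)]
    by (simp add: AH_def)
  also have "1 / real (j + 1) < 2 / real (2 * i + 3)"
    using assms(3) by (simp add: divide_simps)
  also have "ereal (2 / real (2 * i + 3)) \<le> AH d (star_lang [a]) (star_lang (replicate i a @ [b]))"
    using AH_dir_block_star_letter_star_ge[OF assms(1,2)] by (simp add: AH_def le_max_iff_disj)
  finally show ?thesis by simp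
qed

end
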